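(* Let $f:\mathbb{R}\to(0,\infty)$ be a smooth function with positive lower and upper bounds, and let $g_f=-f^2(x)\,dt^2+dx^2$ on $\mathbb{R}^2$ with coordinates $(t,x)$, time-oriented by $\partial/\partial t$. If $p=(t_0,x_0)$ and $f(x_0)=\sup_{x\in\mathbb{R}}f(x)$, then $p$ is a timelike pole of $(\mathbb{R}^2,g_f)$.
   Context: A point $p$ of a Lorentzian manifold is a timelike pole if no timelike geodesic starting at $p$ contains a pair of conjugate points. *)

theory Defs
  imports "HOL-Analysis.Analysis"
begin

text \<open>Pseudo-Riemannian geometry on the coordinate chart R^2 (index type 2).
  A metric is given by its component matrix g p at each point p.\<close>

type_synonym metric2 = "real^2 \<Rightarrow> real^2^2"

definition smooth_fun :: "(real \<Rightarrow> real) \<Rightarrow> bool" where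
  "smooth_fun f \<longleftrightarrow> (\<forall>n x. ((deriv ^^ n) f) differentiable (at x))"

definition pd :: "2 \<Rightarrow> (real^2 \<Rightarrow> real) \<Rightarrow> real^2 \<Rightarrow> real" where
  "pd k h p = deriv (\<lambda>s. h (p + s *\<^sub>R axis k 1)) 0"

definition gform :: "metric2 \<Rightarrow> real^2 \<Rightarrow> real^2 \<Rightarrow> real^2 \<Rightarrow> real" where
  "gform g p u v = (\<Sum>i\<in>UNIV. \<Sum>j\<in>UNIV. g p $ i $ j * u $ i * v $ j)"

definition christ :: "metric2 \<Rightarrow> 2 \<Rightarrow> 2 \<Rightarrow> 2 \<Rightarrow> real^2 \<Rightarrow> real" where
  "christ g k i j p = (1/2) * (\<Sum>l\<in>UNIV. matrix_inv (g p) $ k $ l *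
      (pd i (\<lambda>q. g q $ j $ l) p + pd j (\<lambda>q. g q $ i $ l) p - pd l (\<lambda>q. g q $ i $ j) p))"

text \<open>Riemann tensor components: R(d_i,d_j)d_k = R^l_{ijk} d_l, with
  R(X,Y)Z = nabla_X nabla_Y Z - nabla_Y nabla_X Z - nabla_[X,Y] Z.\<close>
definition riem :: "metric2 \<Rightarrow> 2 \<Rightarrow> 2 \<Rightarrow> 2 \<Rightarrow> 2 \<Rightarrow> real^2 \<Rightarrow> real" where
  "riem g l i j k p = pd i (christ g l j k) p - pd j (christ g l i k) p
     + (\<Sum>m\<in>UNIV. christ g l i m p * christ g m j k p - christ g l j m p * christ g m i k p)"

definition vel :: "(real \<Rightarrow> real^2) \<Rightarrow> real \<Rightarrow> real \<Rightarrow> real^2" where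
  "vel \<gamma> b s = vector_derivative \<gamma> (at s within {0..b})"

definition geodesic_on :: "metric2 \<Rightarrow> (real \<Rightarrow> real^2) \<Rightarrow> real \<Rightarrow> bool" where
  "geodesic_on g \<gamma> b \<longleftrightarrow> (\<exists>\<gamma>1 \<gamma>2. \<forall>s\<in>{0..b}.
     (\<gamma> has_vector_derivative \<gamma>1 s) (at s within {0..b}) \<and>
     (\<gamma>1 has_vector_derivative \<gamma>2 s) (at s within {0..b}) \<and>
     (\<forall>k. \<gamma>2 s $ k + (\<Sum>i\<in>UNIV. \<Sum>j\<in>UNIV. christ g k i j (\<gamma> s) * \<gamma>1 s $ i * \<gamma>1 s $ j) = 0))"

text \<open>Covariant derivative along gamma of a vector field V with ordinary derivative V'.\<close>
definition covd :: "metric2 \<Rightarrow> (real \<Rightarrow> real^2) \<Rightarrow> real \<Rightarrow> (real \<Rightarrow> real^2) \<Rightarrow> (real \<Rightarrow> real^2) \<Rightarrow> real \<Rightarrow> real^2" where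
  "covd g \<gamma> b V' V r = (\<chi> k. V' r $ k + (\<Sum>i\<in>UNIV. \<Sum>j\<in>UNIV. christ g k i j (\<gamma> r) * vel \<gamma> b r $ i * V r $ j))"

text \<open>Jacobi field along gamma: D_s D_s J + R(J, gamma') gamma' = 0.\<close>
definition jacobi_field :: "metric2 \<Rightarrow> (real \<Rightarrow> real^2) \<Rightarrow> real \<Rightarrow> (real \<Rightarrow> real^2) \<Rightarrow> bool" where
  "jacobi_field g \<gamma> b J \<longleftrightarrow> (\<exists>J1 W1. \<forall>s\<in>{0..b}.
     (J has_vector_derivative J1 s) (at s within {0..b}) \<and>
     (covd g \<gamma> b J1 J has_vector_derivative W1 s) (at s within {0..b}) \<and>
     (\<forall>l. W1 s $ l
        + (\<Sum>i\<in>UNIV. \<Sum>j\<in>UNIV. christ g l i j (\<gamma> s) * vel \<gamma> b s $ i * covd g \<gamma> b J1 J s $ j)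
        + (\<Sum>i\<in>UNIV. \<Sum>j\<in>UNIV. \<Sum>k\<in>UNIV. riem g l i j k (\<gamma> s) * J s $ i * vel \<gamma> b s $ j * vel \<gamma> b s $ k)
        = 0))"

definition conjugate_pair :: "metric2 \<Rightarrow> (real \<Rightarrow> real^2) \<Rightarrow> real \<Rightarrow> real \<Rightarrow> real \<Rightarrow> bool" where
  "conjugate_pair g \<gamma> b s1 s2 \<longleftrightarrow> s1 \<in> {0..b} \<and> s2 \<in> {0..b} \<and> s1 \<noteq> s2 \<and>
     (\<exists>J. jacobi_field g \<gamma> b J \<and> J s1 = 0 \<and> J s2 = 0 \<and> (\<exists>s\<in>{0..b}. J s \<noteq> 0))"

definition timelike_geodesic :: "metric2 \<Rightarrow> (real \<Rightarrow> real^2) \<Rightarrow> real \<Rightarrow> bool" where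
  "timelike_geodesic g \<gamma> b \<longleftrightarrow> geodesic_on g \<gamma> b \<and>
     (\<forall>s\<in>{0..b}. gform g (\<gamma> s) (vel \<gamma> b s) (vel \<gamma> b s) < 0)"

definition timelike_pole :: "metric2 \<Rightarrow> real^2 \<Rightarrow> bool" where
  "timelike_pole g p \<longleftrightarrow> (\<forall>\<gamma> b. b > 0 \<and> timelike_geodesic g \<gamma> b \<and> \<gamma> 0 = p \<longrightarrow>
      \<not> (\<exists>s1 s2. conjugate_pair g \<gamma> b s1 s2))"

text \<open>The metric g_f = -f(x)^2 dt^2 + dx^2; coordinate 1 is t, coordinate 2 is x.\<close>
definition gf :: "(real \<Rightarrow> real) \<Rightarrow> metric2" where
  "gf f p = (\<chi> i j. if i = j then (if i = 1 then - (f (p $ 2) * f (p $ 2)) else 1) else 0)"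

end

theory Submission
  imports Defs
begin

text \<open>Let \<open>J\<close> be a Jacobi field along a timelike geodesic \<open>\<gamma>\<close> from \<open>p\<close>. Its tangential part
  \<open>g(J, \<gamma>')\<close> is an affine function of the parameter, so it vanishes identically once \<open>J\<close> has two
  zeros. Its normal part \<open>\<psi>\<close> solves the scalar Jacobi equation \<open>\<psi>'' = k \<psi>\<close> with
  \<open>k = (f''/f) g(\<gamma>', \<gamma>')\<close>, and by Sturm comparison it cannot vanish twice as soon as this equation
  has a nowhere vanishing solution. If \<open>\<gamma>\<close> starts with \<open>x' \<noteq> 0\<close>, such a solution is the normal
  part \<open>f(x) x'\<close> of the Killing field \<open>\<partial>\<^sub>t\<close>: conservation of \<open>f\<^sup>2 t'\<close> and of \<open>g(\<gamma>', \<gamma>')\<close>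
  together with \<open>f \<le> f(x\<^sub>0)\<close> keep \<open>x'\<close> away from zero. If \<open>\<gamma>\<close> starts with \<open>x' = 0\<close>, it stays on the
  line \<open>x = x\<^sub>0\<close>, where \<open>f' = 0\<close>; there \<open>k\<close> is a nonnegative constant because \<open>f''(x\<^sub>0) \<le> 0\<close>, and
  \<open>cosh (\<surd>k s)\<close> is a solution.\<close>

section \<open>Christoffel symbols and curvature of \<open>g\<^sub>f\<close>\<close>

lemma matrix_inv_eqI:
  fixes A :: "'a::semiring_1^'n^'m"
  assumes "A ** B = mat 1" and "B ** A = mat 1"
  shows "matrix_inv A = B"
proof -
  have inv: "A ** matrix_inv A = mat 1 \<and> matrix_inv A ** A = mat 1"
    unfolding matrix_inv_def using assms by (intro someI_ex[of "\<lambda>B. A ** B = mat 1 \<and> B ** A = mat 1"]) blast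
  have "matrix_inv A = matrix_inv A ** (A ** B)"
    using assms by (simp add: matrix_mul_rid)
  also have "\<dots> = B"
    using inv by (simp add: matrix_mul_assoc matrix_mul_lid)
  finally show ?thesis .
qed

definition gf_inv :: "(real \<Rightarrow> real) \<Rightarrow> real^2 \<Rightarrow> real^2^2" where
  "gf_inv f p = (\<chi> i j. if i = j then (if i = 1 then - 1 / (f (p$2))\<^sup>2 else 1) else 0)"

lemma matrix_inv_gf:
  assumes "f (p$2) \<noteq> 0"
  shows "matrix_inv (gf f p) = gf_inv f p"
  using assms
  by (intro matrix_inv_eqI)
     (auto simp: matrix_matrix_mult_def mat_def vec_eq_iff forall_2 sum_2 gf_def gf_inv_def power2_eq_square)

lemma pd_comp_snd:
  assumes "(h has_real_derivative h') (at (p$2))"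
  shows "pd k (\<lambda>q. h (q$2)) p = (if k = 2 then h' else 0)"
proof -
  have "(\<lambda>s. h ((p + s *\<^sub>R axis k 1) $ 2)) = (\<lambda>s. h (p$2 + (if k = 2 then s else 0)))"
    by (auto simp: axis_def)
  moreover have "((\<lambda>s. h (p$2 + s)) has_real_derivative h') (at 0)"
    using DERIV_chain2[OF _ DERIV_add[OF DERIV_const DERIV_ident]] assms by force
  ultimately show ?thesis
    unfolding pd_def by (auto simp: DERIV_imp_deriv)
qed

lemma pd_gf:
  assumes "\<And>y. (f has_real_derivative deriv f y) (at y)"
  shows "pd i (\<lambda>q. gf f q $ j $ l) p =
    (if i = 2 \<and> j = 1 \<and> l = 1 then - 2 * f (p$2) * deriv f (p$2) else 0)"
proof -
  define h where "h y = (if j = l then if j = 1 then - (f y)\<^sup>2 else 1 else 0)" for y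
  have "(h has_real_derivative (if j = 1 \<and> l = 1 then - 2 * f (p$2) * deriv f (p$2) else 0)) (at (p$2))"
  proof (cases "j = 1 \<and> l = 1")
    case True
    then show ?thesis
      unfolding h_def by (auto intro!: derivative_eq_intros assms)
  next
    case False
    then have "h = (\<lambda>_. if j = l then 1 else 0)"
      unfolding h_def by auto
    with False show ?thesis
      by auto
  qed
  moreover have "(\<lambda>q. gf f q $ j $ l) = (\<lambda>q. h (q$2))"
    by (auto simp: gf_def h_def power2_eq_square)
  ultimately show ?thesis
    by (simp add: pd_comp_snd)
qed

lemma christ_gf:
  assumes "\<And>y. (f has_real_derivative deriv f y) (at y)" and "\<And>y. f y \<noteq> 0"
  shows "christ (gf f) k i j p =
    (if k = 1 \<and> i \<noteq> j then deriv f (p$2) / f (p$2)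
     else if k = 2 \<and> i = 1 \<and> j = 1 then f (p$2) * deriv f (p$2) else 0)"
  using assms(2)[of "p$2"] exhaust_2[of k] exhaust_2[of i] exhaust_2[of j]
  unfolding christ_def matrix_inv_gf[OF assms(2)] pd_gf[OF assms(1)] sum_2
  by (auto simp: gf_inv_def field_simps power2_eq_square)

lemma pd_christ_gf:
  assumes "\<And>y. (f has_real_derivative deriv f y) (at y)"
    and "\<And>y. (deriv f has_real_derivative deriv (deriv f) y) (at y)"
    and "\<And>y. f y \<noteq> 0"
  shows "pd i (christ (gf f) k m n) p =
    (if i = 2 \<and> k = 1 \<and> m \<noteq> n then deriv (deriv f) (p$2) / f (p$2) - (deriv f (p$2) / f (p$2))\<^sup>2
     else if i = 2 \<and> k = 2 \<and> m = 1 \<and> n = 1 then (deriv f (p$2))\<^sup>2 + f (p$2) * deriv (deriv f) (p$2)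
     else 0)"
proof -
  define h where "h y = (if k = 1 \<and> m \<noteq> n then deriv f y / f y
     else if k = 2 \<and> m = 1 \<and> n = 1 then f y * deriv f y else 0)" for y
  have "(h has_real_derivative
     (if k = 1 \<and> m \<noteq> n then deriv (deriv f) (p$2) / f (p$2) - (deriv f (p$2) / f (p$2))\<^sup>2
      else if k = 2 \<and> m = 1 \<and> n = 1 then (deriv f (p$2))\<^sup>2 + f (p$2) * deriv (deriv f) (p$2)
      else 0)) (at (p$2))"
  proof (cases "k = 1 \<and> m \<noteq> n \<or> k = 2 \<and> m = 1 \<and> n = 1")
    case True
    then show ?thesis
      unfolding h_def using assms(3)[of "p$2"]
      by (auto intro!: derivative_eq_intros assms(1,2) simp: field_simps power2_eq_square)
  next
    case False
    then have "h = (\<lambda>_. 0)"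
      unfolding h_def by auto
    with False show ?thesis
      by auto
  qed
  moreover have "christ (gf f) k m n = (\<lambda>q. h (q$2))"
    by (intro ext) (simp add: christ_gf[OF assms(1,3)] h_def)
  ultimately show ?thesis
    by (simp add: pd_comp_snd)
qed

definition gf_riem :: "(real \<Rightarrow> real) \<Rightarrow> 2 \<Rightarrow> 2 \<Rightarrow> 2 \<Rightarrow> 2 \<Rightarrow> real \<Rightarrow> real" where
  "gf_riem f l i j k y =
    (if i \<noteq> j \<and> k \<noteq> l
     then (if i = 1 then - 1 else 1) * (if l = 1 then deriv (deriv f) y / f y else f y * deriv (deriv f) y)
     else 0)"

lemma riem_gf:
  assumes "\<And>y. (f has_real_derivative deriv f y) (at y)"
    and "\<And>y. (deriv f has_real_derivative deriv (deriv f) y) (at y)"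
    and "\<And>y. f y \<noteq> 0"
  shows "riem (gf f) l i j k p = gf_riem f l i j k (p$2)"
  using assms(3)[of "p$2"] exhaust_2[of l] exhaust_2[of i] exhaust_2[of j] exhaust_2[of k]
  unfolding riem_def pd_christ_gf[OF assms] christ_gf[OF assms(1,3)] sum_2 gf_riem_def
  by (auto simp: field_simps power2_eq_square)

section \<open>Scalar differential equations on an interval\<close>

lemma mvt_within_Icc:
  fixes q :: "real \<Rightarrow> real"
  assumes "\<And>s. s \<in> {a..b} \<Longrightarrow> (q has_real_derivative q' s) (at s within {a..b})"
    and "a \<le> x" "x < y" "y \<le> b"
  shows "\<exists>z\<in>{x<..<y}. q y - q x = (y - x) * q' z"
proof -
  have "(q has_derivative (\<lambda>h. q' s * h)) (at s within {x..y})" if "s \<in> {x..y}" for s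
  proof (rule has_derivative_subset)
    show "(q has_derivative (\<lambda>h. q' s * h)) (at s within {a..b})"
      using assms that by (simp add: has_field_derivative_def)
  qed (use assms in auto)
  then show ?thesis
    using mvt_simple[OF \<open>x < y\<close>, of q "\<lambda>s h. q' s * h"] by (auto simp: mult.commute)
qed

lemma has_real_derivative_0_on_Icc_const:
  assumes "\<And>s. s \<in> {a..b} \<Longrightarrow> (h has_real_derivative 0) (at s within {a..b})" and "s \<in> {a..b}"
  shows "h s = h a"
  using has_field_derivative_zero_constant[where s="{a..b}" and f=h] assms by force

lemma has_real_derivative_on_Icc_bounded:
  assumes "\<And>s. s \<in> {a..b} \<Longrightarrow> (h has_real_derivative h' s) (at s within {a..b})"
  obtains B where "\<And>s. s \<in> {a..b} \<Longrightarrow> \<bar>h s\<bar> \<le> B"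
proof -
  have "bounded (h ` {a..b})"
    using compact_imp_bounded[OF compact_continuous_image[OF DERIV_continuous_on[OF assms] compact_Icc]] .
  then obtain B where "\<And>y. y \<in> h ` {a..b} \<Longrightarrow> norm y \<le> B"
    unfolding bounded_iff by blast
  then show ?thesis
    using that[of B] by simp
qed

lemma two_mul_bound_sum_squares:
  fixes d y w K :: real
  assumes "\<bar>w\<bar> \<le> K * \<bar>d\<bar>" and "0 \<le> K"
  shows "2 * d * y - 2 * y * w \<le> (1 + K) * (d\<^sup>2 + y\<^sup>2)"
proof -
  have "d * y \<le> \<bar>d\<bar> * \<bar>y\<bar>" and "- (y * w) \<le> \<bar>y\<bar> * \<bar>w\<bar>"
    by (metis abs_ge_self abs_mult, metis abs_ge_minus_self abs_mult)
  moreover have "\<bar>y\<bar> * \<bar>w\<bar> \<le> K * (\<bar>d\<bar> * \<bar>y\<bar>)"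
    using mult_left_mono[OF assms(1), of "\<bar>y\<bar>"] by (simp add: algebra_simps)
  moreover have "(1 + K) * (2 * \<bar>d\<bar> * \<bar>y\<bar>) \<le> (1 + K) * (d\<^sup>2 + y\<^sup>2)"
    using sum_squares_bound[of "\<bar>d\<bar>" "\<bar>y\<bar>"] assms(2) by (intro mult_left_mono) auto
  ultimately show ?thesis
    by (simp add: algebra_simps)
qed

lemma gronwall_zero:
  fixes E :: "real \<Rightarrow> real"
  assumes "\<And>s. s \<in> {a..b} \<Longrightarrow> (E has_real_derivative E' s) (at s within {a..b})"
    and "\<And>s. s \<in> {a..b} \<Longrightarrow> E' s \<le> C * E s"
    and "\<And>s. s \<in> {a..b} \<Longrightarrow> 0 \<le> E s"
    and "E a = 0" and "s \<in> {a..b}"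
  shows "E s = 0"
proof (cases "s = a")
  case False
  define G where "G s = E s * exp (- C * s)" for s
  have dG: "(G has_real_derivative (E' s - C * E s) * exp (- C * s)) (at s within {a..b})"
    if "s \<in> {a..b}" for s
    unfolding G_def
    by (rule derivative_eq_intros refl assms(1)[OF that] | simp add: algebra_simps)+
  have "a < s" "s \<le> b"
    using False \<open>s \<in> {a..b}\<close> by auto
  then obtain w where w: "w \<in> {a<..<s}" and "G s - G a = (s - a) * ((E' w - C * E w) * exp (- C * w))"
    using mvt_within_Icc[OF dG order_refl] by blast
  moreover have "(E' w - C * E w) * exp (- C * w) \<le> 0"
    using assms(2)[of w] w \<open>s \<in> {a..b}\<close> by (intro mult_nonpos_nonneg) auto
  ultimately have "G s \<le> 0"
    using \<open>a < s\<close> \<open>E a = 0\<close> by (simp add: G_def mult_nonneg_nonpos)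
  then show ?thesis
    using assms(3)[OF \<open>s \<in> {a..b}\<close>] by (simp add: G_def mult_le_0_iff)
qed (use assms in simp)

definition scalar_jacobi_solution ::
    "(real \<Rightarrow> real) \<Rightarrow> real set \<Rightarrow> (real \<Rightarrow> real) \<Rightarrow> (real \<Rightarrow> real) \<Rightarrow> bool" where
  "scalar_jacobi_solution k S y y' \<longleftrightarrow>
     (\<forall>s\<in>S. (y has_real_derivative y' s) (at s within S) \<and> (y' has_real_derivative k s * y s) (at s within S))"

text \<open>Sturm comparison: the Wronskian of two solutions is constant, and \<open>(\<psi>/\<phi>)' = W/\<phi>\<^sup>2\<close>;
  two zeros of \<open>\<psi>/\<phi>\<close> force \<open>W = 0\<close>, so \<open>\<psi>/\<phi>\<close> is constantly zero.\<close>
lemma scalar_jacobi_solution_eq_0: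
  assumes "scalar_jacobi_solution k {a..b} \<psi> \<psi>'"
    and "scalar_jacobi_solution k {a..b} \<phi> \<phi>'" and \<phi>_nz: "\<And>s. s \<in> {a..b} \<Longrightarrow> \<phi> s \<noteq> 0"
    and "s1 \<in> {a..b}" "s2 \<in> {a..b}" "s1 \<noteq> s2" "\<psi> s1 = 0" "\<psi> s2 = 0"
    and "s \<in> {a..b}"
  shows "\<psi> s = 0"
proof -
  note \<psi> = assms(1)[unfolded scalar_jacobi_solution_def, rule_format]
  note \<phi> = assms(2)[unfolded scalar_jacobi_solution_def, rule_format]
  define W where "W = \<psi>' a * \<phi> a - \<psi> a * \<phi>' a"
  obtain lo hi where lohi: "lo \<in> {a..b}" "hi \<in> {a..b}" "lo < hi" "\<psi> lo = 0" "\<psi> hi = 0"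
    using assms(4-8) by (metis linorder_neqE_linordered_idom)
  have "((\<lambda>s. \<psi>' s * \<phi> s - \<psi> s * \<phi>' s) has_real_derivative 0) (at s within {a..b})"
    if "s \<in> {a..b}" for s
    using \<psi>[OF that] \<phi>[OF that] by (auto intro!: derivative_eq_intros simp: algebra_simps)
  then have W: "\<psi>' s * \<phi> s - \<psi> s * \<phi>' s = W" if "s \<in> {a..b}" for s
    unfolding W_def using that by (rule has_real_derivative_0_on_Icc_const)
  have quot: "((\<lambda>s. \<psi> s / \<phi> s) has_real_derivative W / (\<phi> s)\<^sup>2) (at s within {a..b})"
    if "s \<in> {a..b}" for s
  proof -
    have "((\<lambda>s. \<psi> s / \<phi> s) has_real_derivative (\<psi>' s * \<phi> s - \<psi> s * \<phi>' s) / (\<phi> s * \<phi> s)) (at s within {a..b})"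
      using \<psi>[OF that] \<phi>[OF that] \<phi>_nz[OF that] by (auto intro!: derivative_eq_intros)
    then show ?thesis
      using W[OF that] by (simp add: power2_eq_square)
  qed
  have "a \<le> lo" "hi \<le> b"
    using lohi by auto
  then obtain z where "z \<in> {lo<..<hi}" "\<psi> hi / \<phi> hi - \<psi> lo / \<phi> lo = (hi - lo) * (W / (\<phi> z)\<^sup>2)"
    using mvt_within_Icc[OF quot \<open>a \<le> lo\<close> \<open>lo < hi\<close> \<open>hi \<le> b\<close>] by blast
  moreover have "\<phi> z \<noteq> 0"
    using \<phi>_nz \<open>z \<in> {lo<..<hi}\<close> lohi by auto
  ultimately have "W = 0"
    using lohi by simp
  then have "((\<lambda>s. \<psi> s / \<phi> s) has_real_derivative 0) (at s within {a..b})" if "s \<in> {a..b}" for s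
    using quot[OF that] by simp
  then have "\<psi> t / \<phi> t = \<psi> a / \<phi> a" if "t \<in> {a..b}" for t
    using that by (rule has_real_derivative_0_on_Icc_const)
  then have "\<psi> s / \<phi> s = \<psi> lo / \<phi> lo"
    using \<open>s \<in> {a..b}\<close> \<open>lo \<in> {a..b}\<close> by metis
  then show ?thesis
    using lohi \<phi>_nz[OF \<open>s \<in> {a..b}\<close>] by simp
qed

section \<open>The warping function at its maximum\<close>

lemma second_deriv_nonpos_at_max:
  fixes f :: "real \<Rightarrow> real"
  assumes f': "\<And>y. (f has_real_derivative deriv f y) (at y)"
    and f'': "(deriv f has_real_derivative D) (at x0)"
    and max: "\<And>y. f y \<le> f x0"
  shows "D \<le> 0"
proof (rule ccontr)
  assume "\<not> D \<le> 0"
  then obtain d where "d > 0" and incr: "\<And>h. 0 < h \<Longrightarrow> h < d \<Longrightarrow> deriv f x0 < deriv f (x0 + h)"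
    using DERIV_pos_inc_right[OF f''] by force
  obtain z where z: "x0 < z" "z < x0 + d/2" and mvt: "f (x0 + d/2) - f x0 = d/2 * deriv f z"
    using MVT2[of x0 "x0 + d/2" f "deriv f"] f' \<open>d > 0\<close> by auto
  have "deriv f x0 = 0"
    using DERIV_local_max[OF f' zero_less_one] max by auto
  then have "deriv f z > 0"
    using incr[of "z - x0"] z by simp
  then have "f (x0 + d/2) - f x0 > 0"
    unfolding mvt using \<open>d > 0\<close> by simp
  then show False
    using max by (simp add: not_less[symmetric])
qed

lemma deriv_linear_bound_at_max:
  fixes f :: "real \<Rightarrow> real"
  assumes f': "\<And>y. (f has_real_derivative deriv f y) (at y)"
    and f'': "\<And>y. (deriv f has_real_derivative deriv (deriv f) y) (at y)"
    and cont: "continuous_on UNIV (deriv (deriv f))"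
    and max: "\<And>y. f y \<le> f x0"
  obtains M where "0 \<le> M" and "\<And>y. y \<in> {x0 - R..x0 + R} \<Longrightarrow> \<bar>deriv f y\<bar> \<le> M * \<bar>y - x0\<bar>"
proof -
  have "bounded (deriv (deriv f) ` {x0 - R..x0 + R})"
    using compact_imp_bounded[OF compact_continuous_image[OF continuous_on_subset[OF cont] compact_Icc]]
    by blast
  then obtain M where "0 < M" and M: "\<And>y. y \<in> {x0 - R..x0 + R} \<Longrightarrow> norm (deriv (deriv f) y) \<le> M"
    unfolding bounded_pos by blast
  have "deriv f x0 = 0"
    using DERIV_local_max[OF f' zero_less_one] max by auto
  moreover have "norm (deriv f y - deriv f x0) \<le> M * norm (y - x0)" if "y \<in> {x0 - R..x0 + R}" for y
  proof (cases "R \<ge> 0")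
    case True
    then show ?thesis
      using field_differentiable_bound[OF convex_real_interval(5) has_field_derivative_at_within[OF f''] M that]
      by simp
  qed (use that in simp)
  ultimately show ?thesis
    using that[of M] \<open>0 < M\<close> by simp
qed

section \<open>Geodesics and Jacobi fields of \<open>g\<^sub>f\<close> in coordinates\<close>

lemma orthogonal_to_timelike_eq_0:
  fixes a T Y P Q :: real
  assumes "Q * Y = a\<^sup>2 * P * T" and "T * Q = Y * P" and "Y\<^sup>2 < (a * T)\<^sup>2"
  shows "P = 0 \<and> Q = 0"
proof -
  have "P * Y\<^sup>2 = P * (a * T)\<^sup>2"
    using assms(1,2) by (metis (no_types, opaque_lifting) mult.assoc mult.commute power2_eq_square power_mult_distrib)
  then have "P = 0"
    using assms(3) by auto
  moreover have "T \<noteq> 0"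
    using assms(3) by (auto simp: power2_eq_square)
  ultimately show ?thesis
    using assms(2) by simp
qed

text \<open>\<open>x\<close> is the space coordinate of a timelike geodesic and \<open>(T, Y)\<close> are the components of its velocity;
  the assumptions are the geodesic equations of \<open>g\<^sub>f\<close>.\<close>
locale gf_geodesic =
  fixes f :: "real \<Rightarrow> real" and b :: real and x T Y :: "real \<Rightarrow> real"
  assumes f_pos: "\<And>y. 0 < f y"
    and f_deriv: "\<And>y. (f has_real_derivative deriv f y) (at y)"
    and f'_deriv: "\<And>y. (deriv f has_real_derivative deriv (deriv f) y) (at y)"
    and x_deriv: "\<And>s. s \<in> {0..b} \<Longrightarrow> (x has_real_derivative Y s) (at s within {0..b})"
    and T_deriv: "\<And>s. s \<in> {0..b} \<Longrightarrow>
      (T has_real_derivative - 2 * deriv f (x s) / f (x s) * T s * Y s) (at s within {0..b})"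
    and Y_deriv: "\<And>s. s \<in> {0..b} \<Longrightarrow>
      (Y has_real_derivative - f (x s) * deriv f (x s) * (T s)\<^sup>2) (at s within {0..b})"
    and timelike: "\<And>s. s \<in> {0..b} \<Longrightarrow> (Y s)\<^sup>2 < (f (x s) * T s)\<^sup>2"
begin

lemma f_x_deriv:
  "s \<in> {0..b} \<Longrightarrow> ((\<lambda>s. f (x s)) has_real_derivative deriv f (x s) * Y s) (at s within {0..b})"
  by (rule DERIV_chain2[OF f_deriv x_deriv])

lemma f'_x_deriv:
  "s \<in> {0..b} \<Longrightarrow> ((\<lambda>s. deriv f (x s)) has_real_derivative deriv (deriv f) (x s) * Y s) (at s within {0..b})"
  by (rule DERIV_chain2[OF f'_deriv x_deriv])

lemma energy_conserved:
  assumes "s \<in> {0..b}"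
  shows "(f (x s))\<^sup>2 * T s = (f (x 0))\<^sup>2 * T 0"
proof (rule has_real_derivative_0_on_Icc_const[OF _ assms])
  fix s assume s: "s \<in> {0..b}"
  show "((\<lambda>s. (f (x s))\<^sup>2 * T s) has_real_derivative 0) (at s within {0..b})"
    using f_x_deriv[OF s] T_deriv[OF s] f_pos[of "x s"]
    by (auto intro!: derivative_eq_intros simp: field_simps power2_eq_square)
qed

lemma speed_conserved:
  assumes "s \<in> {0..b}"
  shows "(f (x s) * T s)\<^sup>2 - (Y s)\<^sup>2 = (f (x 0) * T 0)\<^sup>2 - (Y 0)\<^sup>2"
proof (rule has_real_derivative_0_on_Icc_const[OF _ assms])
  fix s assume s: "s \<in> {0..b}"
  show "((\<lambda>s. (f (x s) * T s)\<^sup>2 - (Y s)\<^sup>2) has_real_derivative 0) (at s within {0..b})"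
    using f_x_deriv[OF s] T_deriv[OF s] Y_deriv[OF s] f_pos[of "x s"]
    by (auto intro!: derivative_eq_intros simp: field_simps power2_eq_square)
qed

text \<open>The curvature term \<open>K g(\<gamma>', \<gamma>')\<close>, with Gaussian curvature \<open>K = f''/f\<close>.\<close>
definition jacobi_coeff :: "real \<Rightarrow> real" where
  "jacobi_coeff s = deriv (deriv f) (x s) / f (x s) * ((Y s)\<^sup>2 - (f (x s) * T s)\<^sup>2)"

lemma killing_field_jacobi:
  "scalar_jacobi_solution jacobi_coeff {0..b} (\<lambda>s. f (x s) * Y s)
     (\<lambda>s. deriv f (x s) * ((Y s)\<^sup>2 - (f (x s) * T s)\<^sup>2))"
  unfolding scalar_jacobi_solution_def jacobi_coeff_def
proof safe
  fix s assume s: "s \<in> {0..b}"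
  show "((\<lambda>s. f (x s) * Y s) has_real_derivative deriv f (x s) * ((Y s)\<^sup>2 - (f (x s) * T s)\<^sup>2)) (at s within {0..b})"
    using f_x_deriv[OF s] Y_deriv[OF s]
    by (auto intro!: derivative_eq_intros simp: field_simps power2_eq_square)
  show "((\<lambda>s. deriv f (x s) * ((Y s)\<^sup>2 - (f (x s) * T s)\<^sup>2)) has_real_derivative
      deriv (deriv f) (x s) / f (x s) * ((Y s)\<^sup>2 - (f (x s) * T s)\<^sup>2) * (f (x s) * Y s)) (at s within {0..b})"
    using f_x_deriv[OF s] f'_x_deriv[OF s] T_deriv[OF s] Y_deriv[OF s] f_pos[of "x s"]
    by (auto intro!: derivative_eq_intros simp: field_simps power2_eq_square)
qed

lemma Y_nonzero_from_max:
  assumes "x 0 = x0" and max: "\<And>y. f y \<le> f x0" and "Y 0 \<noteq> 0" and s: "s \<in> {0..b}"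
  shows "Y s \<noteq> 0"
proof -
  have "(f (x s) * T s)\<^sup>2 = ((f x0)\<^sup>2 * T 0)\<^sup>2 / (f (x s))\<^sup>2"
    using energy_conserved[OF s] f_pos[of "x s"] \<open>x 0 = x0\<close>
    by (simp add: field_simps power2_eq_square)
  also have "\<dots> \<ge> ((f x0)\<^sup>2 * T 0)\<^sup>2 / (f x0)\<^sup>2"
    using max[of "x s"] f_pos[of "x s"]
    by (intro divide_left_mono power_mono mult_pos_pos) auto
  finally have "(f x0 * T 0)\<^sup>2 \<le> (f (x s) * T s)\<^sup>2"
    using f_pos[of x0] by (simp add: power2_eq_square algebra_simps)
  then have "(Y 0)\<^sup>2 \<le> (Y s)\<^sup>2"
    using speed_conserved[OF s] \<open>x 0 = x0\<close> by simp
  then show ?thesis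
    using \<open>Y 0 \<noteq> 0\<close> by auto
qed

text \<open>A geodesic starting at rest in \<open>x\<close> at a maximum of \<open>f\<close> stays there: \<open>x = x0, Y = 0\<close> solves
  the same initial value problem, and \<open>f'\<close> vanishing to first order at \<open>x0\<close> gives the Gronwall
  estimate for \<open>(x - x0)\<^sup>2 + Y\<^sup>2\<close>.\<close>
lemma stays_at_max:
  assumes "x 0 = x0" and max: "\<And>y. f y \<le> f x0" and "Y 0 = 0"
    and cont: "continuous_on UNIV (deriv (deriv f))" and s: "s \<in> {0..b}"
  shows "x s = x0 \<and> Y s = 0"
proof -
  have "((\<lambda>s. x s - x0) has_real_derivative Y s) (at s within {0..b})" if "s \<in> {0..b}" for s
    using x_deriv[OF that] by (auto intro!: derivative_eq_intros)
  from has_real_derivative_on_Icc_bounded[OF this]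
  obtain R where R: "\<And>s. s \<in> {0..b} \<Longrightarrow> \<bar>x s - x0\<bar> \<le> R"
    by blast
  obtain BT where BT: "\<And>s. s \<in> {0..b} \<Longrightarrow> \<bar>T s\<bar> \<le> BT"
    using has_real_derivative_on_Icc_bounded[OF T_deriv] by blast
  obtain M where "0 \<le> M" and M: "\<And>y. y \<in> {x0 - R..x0 + R} \<Longrightarrow> \<bar>deriv f y\<bar> \<le> M * \<bar>y - x0\<bar>"
    using deriv_linear_bound_at_max[OF f_deriv f'_deriv cont max, of R] by blast
  define K where "K = f x0 * BT\<^sup>2 * M"
  define E where "E s = (x s - x0)\<^sup>2 + (Y s)\<^sup>2" for s
  have E_deriv: "(E has_real_derivative 2 * (x s - x0) * Y s - 2 * Y s * (f (x s) * deriv f (x s) * (T s)\<^sup>2))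
      (at s within {0..b})" if "s \<in> {0..b}" for s
    unfolding E_def using x_deriv[OF that] Y_deriv[OF that]
    by (auto intro!: derivative_eq_intros simp: algebra_simps)
  have E_growth: "2 * (x s - x0) * Y s - 2 * Y s * (f (x s) * deriv f (x s) * (T s)\<^sup>2) \<le> (1 + K) * E s"
    if s: "s \<in> {0..b}" for s
  proof -
    have "\<bar>f (x s) * deriv f (x s) * (T s)\<^sup>2\<bar> = f (x s) * \<bar>deriv f (x s)\<bar> * \<bar>T s\<bar>\<^sup>2"
      using f_pos[of "x s"] by (simp add: abs_mult)
    also have "\<dots> \<le> f x0 * (M * \<bar>x s - x0\<bar>) * BT\<^sup>2"
      using max[of "x s"] f_pos[of "x s"] M[of "x s"] R[OF s] BT[OF s] \<open>0 \<le> M\<close>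
      by (intro mult_mono power_mono) (auto simp: abs_le_iff)
    finally have "\<bar>f (x s) * deriv f (x s) * (T s)\<^sup>2\<bar> \<le> K * \<bar>x s - x0\<bar>"
      by (simp add: K_def algebra_simps)
    then show ?thesis
      unfolding E_def using \<open>0 \<le> M\<close> f_pos[of x0] by (intro two_mul_bound_sum_squares) (auto simp: K_def)
  qed
  have "E s = 0"
    by (rule gronwall_zero[OF E_deriv E_growth]) (use s \<open>x 0 = x0\<close> \<open>Y 0 = 0\<close> in \<open>auto simp: E_def\<close>)
  then show ?thesis
    by (simp add: E_def add_nonneg_eq_0_iff)
qed

lemma scalar_jacobi_nonvanishing_solution:
  assumes "x 0 = x0" and max: "\<And>y. f y \<le> f x0"
    and cont: "continuous_on UNIV (deriv (deriv f))"
  obtains \<phi> \<phi>' where "scalar_jacobi_solution jacobi_coeff {0..b} \<phi> \<phi>'" and "\<And>s. s \<in> {0..b} \<Longrightarrow> \<phi> s \<noteq> 0"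
proof (cases "Y 0 = 0")
  case False
  show ?thesis
  proof (rule that[OF killing_field_jacobi])
    fix s assume "s \<in> {0..b}"
    then show "f (x s) * Y s \<noteq> 0"
      using Y_nonzero_from_max[OF \<open>x 0 = x0\<close> max False] f_pos[of "x s"] by simp
  qed
next
  case True
  define \<kappa> where "\<kappa> = - deriv (deriv f) x0 / f x0 * (f x0 * T 0)\<^sup>2"
  have "\<kappa> \<ge> 0"
    using second_deriv_nonpos_at_max[OF f_deriv f'_deriv max] f_pos[of x0]
    unfolding \<kappa>_def by (intro mult_nonneg_nonneg divide_nonneg_pos) auto
  have "jacobi_coeff s = \<kappa>" if "s \<in> {0..b}" for s
    using stays_at_max[OF \<open>x 0 = x0\<close> max True cont that] speed_conserved[OF that] \<open>x 0 = x0\<close> True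
    by (simp add: jacobi_coeff_def \<kappa>_def)
  then have "scalar_jacobi_solution jacobi_coeff {0..b} (\<lambda>s. cosh (sqrt \<kappa> * s)) (\<lambda>s. sqrt \<kappa> * sinh (sqrt \<kappa> * s))"
    unfolding scalar_jacobi_solution_def using \<open>\<kappa> \<ge> 0\<close>
    by (auto intro!: derivative_eq_intros)
  then show ?thesis
    using that by (metis cosh_real_pos less_irrefl)
qed

end

text \<open>\<open>(P, Q)\<close> are the components of a Jacobi field \<open>J\<close> and \<open>(U, V)\<close> those of its covariant derivative;
  the equations for \<open>U'\<close> and \<open>V'\<close> spell out \<open>D\<^sub>s\<^sup>2 J = - R(J, \<gamma>') \<gamma>'\<close>.\<close>
locale gf_jacobi = gf_geodesic +
  fixes P Q U V :: "real \<Rightarrow> real"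
  assumes P_deriv: "\<And>s. s \<in> {0..b} \<Longrightarrow>
      (P has_real_derivative U s - deriv f (x s) / f (x s) * (T s * Q s + Y s * P s)) (at s within {0..b})"
    and Q_deriv: "\<And>s. s \<in> {0..b} \<Longrightarrow>
      (Q has_real_derivative V s - f (x s) * deriv f (x s) * T s * P s) (at s within {0..b})"
    and U_deriv: "\<And>s. s \<in> {0..b} \<Longrightarrow>
      (U has_real_derivative - deriv f (x s) / f (x s) * (T s * V s + Y s * U s)
         + deriv (deriv f) (x s) / f (x s) * Y s * (Y s * P s - T s * Q s)) (at s within {0..b})"
    and V_deriv: "\<And>s. s \<in> {0..b} \<Longrightarrow>
      (V has_real_derivative - f (x s) * deriv f (x s) * T s * U s
         + f (x s) * deriv (deriv f) (x s) * T s * (Y s * P s - T s * Q s)) (at s within {0..b})"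
begin

text \<open>The tangential component is \<open>g(J, \<gamma>')\<close>; its derivative \<open>g(D\<^sub>s J, \<gamma>')\<close> is constant since
  \<open>g(R(J, \<gamma>') \<gamma>', \<gamma>') = 0\<close>.\<close>
lemma tangential_component_affine:
  obtains c0 c1 where "\<And>s. s \<in> {0..b} \<Longrightarrow> Q s * Y s - (f (x s))\<^sup>2 * P s * T s = c0 * s + c1"
proof -
  define A where "A s = Q s * Y s - (f (x s))\<^sup>2 * P s * T s" for s
  define A' where "A' s = V s * Y s - (f (x s))\<^sup>2 * U s * T s" for s
  have dA: "(A has_real_derivative A' s) (at s within {0..b})" if "s \<in> {0..b}" for s
    unfolding A_def A'_def using f_pos[of "x s"]
    by (auto intro!: derivative_eq_intros f_x_deriv[OF that] T_deriv[OF that] Y_deriv[OF that]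
        P_deriv[OF that] Q_deriv[OF that] simp: field_simps power2_eq_square)
  have "(A' has_real_derivative 0) (at s within {0..b})" if "s \<in> {0..b}" for s
    unfolding A'_def using f_pos[of "x s"]
    by (auto intro!: derivative_eq_intros f_x_deriv[OF that] T_deriv[OF that] Y_deriv[OF that]
        U_deriv[OF that] V_deriv[OF that] simp: field_simps power2_eq_square)
  then have A': "A' s = A' 0" if "s \<in> {0..b}" for s
    using that by (rule has_real_derivative_0_on_Icc_const)
  have "((\<lambda>s. A s - s * A' 0) has_real_derivative 0) (at s within {0..b})" if "s \<in> {0..b}" for s
    using DERIV_diff[OF dA[OF that] DERIV_cmult_right[OF DERIV_ident, of "A' 0"]] A'[OF that] by simp
  then have "A s - s * A' 0 = A 0" if "s \<in> {0..b}" for s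
    using has_real_derivative_0_on_Icc_const[where h="\<lambda>s. A s - s * A' 0", OF _ that] by simp
  then show ?thesis
    using that[of "A' 0" "A 0"] by (simp add: A_def algebra_simps)
qed

lemma normal_component_jacobi:
  "scalar_jacobi_solution jacobi_coeff {0..b} (\<lambda>s. f (x s) * (T s * Q s - Y s * P s))
     (\<lambda>s. f (x s) * (T s * V s - Y s * U s))"
  unfolding scalar_jacobi_solution_def jacobi_coeff_def
proof safe
  fix s assume s: "s \<in> {0..b}"
  show "((\<lambda>s. f (x s) * (T s * Q s - Y s * P s)) has_real_derivative f (x s) * (T s * V s - Y s * U s))
      (at s within {0..b})"
    using f_pos[of "x s"]
    by (auto intro!: derivative_eq_intros f_x_deriv[OF s] T_deriv[OF s] Y_deriv[OF s]
        P_deriv[OF s] Q_deriv[OF s] simp: field_simps power2_eq_square)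
  show "((\<lambda>s. f (x s) * (T s * V s - Y s * U s)) has_real_derivative
      deriv (deriv f) (x s) / f (x s) * ((Y s)\<^sup>2 - (f (x s) * T s)\<^sup>2) * (f (x s) * (T s * Q s - Y s * P s)))
      (at s within {0..b})"
    using f_pos[of "x s"]
    by (auto intro!: derivative_eq_intros f_x_deriv[OF s] T_deriv[OF s] Y_deriv[OF s]
        U_deriv[OF s] V_deriv[OF s] simp: field_simps power2_eq_square)
qed

lemma jacobi_eq_0_if_two_zeros:
  assumes "x 0 = x0" and "\<And>y. f y \<le> f x0" and "continuous_on UNIV (deriv (deriv f))"
    and "s1 \<in> {0..b}" "s2 \<in> {0..b}" "s1 \<noteq> s2"
    and "P s1 = 0" "Q s1 = 0" "P s2 = 0" "Q s2 = 0"
    and s: "s \<in> {0..b}"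
  shows "P s = 0 \<and> Q s = 0"
proof -
  obtain c0 c1 where A: "\<And>s. s \<in> {0..b} \<Longrightarrow> Q s * Y s - (f (x s))\<^sup>2 * P s * T s = c0 * s + c1"
    using tangential_component_affine by blast
  have "c0 * s1 + c1 = 0" "c0 * s2 + c1 = 0"
    using A[of s1] A[of s2] assms(4-10) by auto
  then have "c0 * (s1 - s2) = 0"
    unfolding right_diff_distrib by linarith
  then have "c0 = 0" "c1 = 0"
    using \<open>s1 \<noteq> s2\<close> \<open>c0 * s1 + c1 = 0\<close> by auto
  then have tangential: "Q s * Y s = (f (x s))\<^sup>2 * P s * T s"
    using A[OF s] by simp
  obtain \<phi> \<phi>' where "scalar_jacobi_solution jacobi_coeff {0..b} \<phi> \<phi>'" "\<And>s. s \<in> {0..b} \<Longrightarrow> \<phi> s \<noteq> 0"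
    using scalar_jacobi_nonvanishing_solution[OF assms(1-3)] by blast
  then have "f (x s) * (T s * Q s - Y s * P s) = 0"
    using scalar_jacobi_solution_eq_0[OF normal_component_jacobi] assms(4-10) s by auto
  then have normal: "T s * Q s = Y s * P s"
    using f_pos[of "x s"] by simp
  show ?thesis
    using orthogonal_to_timelike_eq_0[OF tangential normal timelike[OF s]] .
qed

end

section \<open>Timelike poles of \<open>g\<^sub>f\<close>\<close>

lemma has_real_derivative_vec_nth:
  assumes "(h has_vector_derivative h') F"
  shows "((\<lambda>s. h s $ k) has_real_derivative h' $ k) F"
  using bounded_linear.has_vector_derivative[OF bounded_linear_vec_nth assms]
  by (simp add: has_real_derivative_iff_has_vector_derivative)

lemma vel_eq:
  assumes "0 < b" and "s \<in> {0..b}" and "(\<gamma> has_vector_derivative v) (at s within {0..b})"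
  shows "vel \<gamma> b s = v"
  unfolding vel_def using vector_derivative_within_closed_interval[OF assms] .

lemma vel_has_vector_derivative:
  assumes "0 < b" and "\<And>s. s \<in> {0..b} \<Longrightarrow> (\<gamma> has_vector_derivative \<gamma>' s) (at s within {0..b})"
    and "(\<gamma>' has_vector_derivative D) (at s within {0..b})" and "s \<in> {0..b}"
  shows "(vel \<gamma> b has_vector_derivative D) (at s within {0..b})"
proof (rule has_vector_derivative_weaken[OF assms(3,4) order_refl])
  fix t assume "t \<in> {0..b}"
  then show "\<gamma>' t = vel \<gamma> b t"
    using vel_eq[OF assms(1) _ assms(2)[OF \<open>t \<in> {0..b}\<close>]] by simp
qed

lemma timelike_geodesic_gf:
  assumes f_pos: "\<And>y. 0 < f y"
    and f': "\<And>y. (f has_real_derivative deriv f y) (at y)"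
    and f'': "\<And>y. (deriv f has_real_derivative deriv (deriv f) y) (at y)"
    and "0 < b" and "timelike_geodesic (gf f) \<gamma> b"
  shows "gf_geodesic f b (\<lambda>s. \<gamma> s $ 2) (\<lambda>s. vel \<gamma> b s $ 1) (\<lambda>s. vel \<gamma> b s $ 2)"
proof -
  have f_nz: "\<And>y. f y \<noteq> 0"
    using f_pos by (metis less_irrefl)
  obtain \<gamma>' \<gamma>'' where geo: "\<And>s. s \<in> {0..b} \<Longrightarrow>
      (\<gamma> has_vector_derivative \<gamma>' s) (at s within {0..b}) \<and>
      (\<gamma>' has_vector_derivative \<gamma>'' s) (at s within {0..b}) \<and>
      (\<forall>k. \<gamma>'' s $ k + (\<Sum>i\<in>UNIV. \<Sum>j\<in>UNIV. christ (gf f) k i j (\<gamma> s) * \<gamma>' s $ i * \<gamma>' s $ j) = 0)"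
    using assms(5) unfolding timelike_geodesic_def geodesic_on_def by blast
  have vel: "vel \<gamma> b s = \<gamma>' s" if "s \<in> {0..b}" for s
    using vel_eq[OF \<open>0 < b\<close> that] geo[OF that] by blast
  have dvel: "(vel \<gamma> b has_vector_derivative \<gamma>'' s) (at s within {0..b})" if "s \<in> {0..b}" for s
    using vel_has_vector_derivative[OF \<open>0 < b\<close> _ _ that] geo that by blast
  show ?thesis
  proof
    fix s assume s: "s \<in> {0..b}"
    note geodesic_eq = geo[OF s, THEN conjunct2, THEN conjunct2, rule_format, unfolded christ_gf[OF f' f_nz] sum_2]
    show "((\<lambda>s. \<gamma> s $ 2) has_real_derivative vel \<gamma> b s $ 2) (at s within {0..b})"
      using has_real_derivative_vec_nth[of \<gamma> "\<gamma>' s"] geo[OF s] vel[OF s] by simp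
    have "\<gamma>'' s $ 1 = - 2 * deriv f (\<gamma> s $ 2) / f (\<gamma> s $ 2) * \<gamma>' s $ 1 * \<gamma>' s $ 2"
      using geodesic_eq[of 1] f_nz[of "\<gamma> s $ 2"] by (auto simp: field_simps)
    then show "((\<lambda>s. vel \<gamma> b s $ 1) has_real_derivative
        - 2 * deriv f (\<gamma> s $ 2) / f (\<gamma> s $ 2) * vel \<gamma> b s $ 1 * vel \<gamma> b s $ 2) (at s within {0..b})"
      using has_real_derivative_vec_nth[OF dvel[OF s], of 1] vel[OF s] by simp
    have "\<gamma>'' s $ 2 = - f (\<gamma> s $ 2) * deriv f (\<gamma> s $ 2) * (\<gamma>' s $ 1)\<^sup>2"
      using geodesic_eq[of 2] by (auto simp: field_simps power2_eq_square)
    then show "((\<lambda>s. vel \<gamma> b s $ 2) has_real_derivative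
        - f (\<gamma> s $ 2) * deriv f (\<gamma> s $ 2) * (vel \<gamma> b s $ 1)\<^sup>2) (at s within {0..b})"
      using has_real_derivative_vec_nth[OF dvel[OF s], of 2] vel[OF s] by simp
    show "(vel \<gamma> b s $ 2)\<^sup>2 < (f (\<gamma> s $ 2) * vel \<gamma> b s $ 1)\<^sup>2"
      using assms(5) s unfolding timelike_geodesic_def gform_def sum_2 gf_def
      by (simp add: power2_eq_square algebra_simps)
  qed (use assms in auto)
qed

lemma covd_gf:
  assumes "\<And>y. (f has_real_derivative deriv f y) (at y)" and "\<And>y. f y \<noteq> 0"
  shows "covd (gf f) \<gamma> b J' J s $ 1 =
      J' s $ 1 + deriv f (\<gamma> s $ 2) / f (\<gamma> s $ 2) * (vel \<gamma> b s $ 1 * J s $ 2 + vel \<gamma> b s $ 2 * J s $ 1)"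
    and "covd (gf f) \<gamma> b J' J s $ 2 = J' s $ 2 + f (\<gamma> s $ 2) * deriv f (\<gamma> s $ 2) * vel \<gamma> b s $ 1 * J s $ 1"
  unfolding covd_def christ_gf[OF assms] sum_2 by (simp_all add: algebra_simps)

lemma jacobi_field_gf:
  assumes f_pos: "\<And>y. 0 < f y"
    and f': "\<And>y. (f has_real_derivative deriv f y) (at y)"
    and f'': "\<And>y. (deriv f has_real_derivative deriv (deriv f) y) (at y)"
    and "0 < b" and "timelike_geodesic (gf f) \<gamma> b" and "jacobi_field (gf f) \<gamma> b J"
  shows "gf_jacobi f b (\<lambda>s. \<gamma> s $ 2) (\<lambda>s. vel \<gamma> b s $ 1) (\<lambda>s. vel \<gamma> b s $ 2)
    (\<lambda>s. J s $ 1) (\<lambda>s. J s $ 2) (\<lambda>s. covd (gf f) \<gamma> b (vel J b) J s $ 1) (\<lambda>s. covd (gf f) \<gamma> b (vel J b) J s $ 2)"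
proof -
  have f_nz: "\<And>y. f y \<noteq> 0"
    using f_pos by (metis less_irrefl)
  let ?D = "covd (gf f) \<gamma> b (vel J b) J"
  obtain J' W' where jac: "\<And>s. s \<in> {0..b} \<Longrightarrow>
      (J has_vector_derivative J' s) (at s within {0..b}) \<and>
      (covd (gf f) \<gamma> b J' J has_vector_derivative W' s) (at s within {0..b}) \<and>
      (\<forall>l. W' s $ l
        + (\<Sum>i\<in>UNIV. \<Sum>j\<in>UNIV. christ (gf f) l i j (\<gamma> s) * vel \<gamma> b s $ i * covd (gf f) \<gamma> b J' J s $ j)
        + (\<Sum>i\<in>UNIV. \<Sum>j\<in>UNIV. \<Sum>k\<in>UNIV. riem (gf f) l i j k (\<gamma> s) * J s $ i * vel \<gamma> b s $ j * vel \<gamma> b s $ k)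
        = 0)"
    using assms(6) unfolding jacobi_field_def by blast
  have vel_J: "vel J b s = J' s" if "s \<in> {0..b}" for s
    using vel_eq[OF \<open>0 < b\<close> that] jac[OF that] by blast
  have covd_eq: "?D s = covd (gf f) \<gamma> b J' J s" if "s \<in> {0..b}" for s
    unfolding covd_def using vel_J[OF that] by simp
  have dD: "(?D has_vector_derivative W' s) (at s within {0..b})" if "s \<in> {0..b}" for s
    using jac[OF that] that by (auto intro: has_vector_derivative_weaken simp: covd_eq)
  interpret gf_geodesic f b "\<lambda>s. \<gamma> s $ 2" "\<lambda>s. vel \<gamma> b s $ 1" "\<lambda>s. vel \<gamma> b s $ 2"
    by (rule timelike_geodesic_gf[OF f_pos f' f'' assms(4,5)])
  show ?thesis
  proof
    fix s assume s: "s \<in> {0..b}"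
    let ?x = "\<gamma> s $ 2" and ?T = "vel \<gamma> b s $ 1" and ?Y = "vel \<gamma> b s $ 2"
    note covd = covd_gf[OF f' f_nz, of \<gamma> b "vel J b" J s, unfolded vel_J[OF s]]
    note jacobi_eq = jac[OF s, THEN conjunct2, THEN conjunct2, rule_format, folded covd_eq[OF s],
        unfolded christ_gf[OF f' f_nz] riem_gf[OF f' f'' f_nz] gf_riem_def sum_2]
    show "((\<lambda>s. J s $ 1) has_real_derivative
        ?D s $ 1 - deriv f ?x / f ?x * (?T * J s $ 2 + ?Y * J s $ 1)) (at s within {0..b})"
      using has_real_derivative_vec_nth[of J "J' s" _ 1] jac[OF s] covd(1) by simp
    show "((\<lambda>s. J s $ 2) has_real_derivative
        ?D s $ 2 - f ?x * deriv f ?x * ?T * J s $ 1) (at s within {0..b})"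
      using has_real_derivative_vec_nth[of J "J' s" _ 2] jac[OF s] covd(2) by simp
    have "W' s $ 1 = - deriv f ?x / f ?x * (?T * ?D s $ 2 + ?Y * ?D s $ 1)
        + deriv (deriv f) ?x / f ?x * ?Y * (?Y * J s $ 1 - ?T * J s $ 2)"
      using jacobi_eq[of 1] f_nz[of ?x] by (auto simp: field_simps)
    then show "((\<lambda>s. ?D s $ 1) has_real_derivative - deriv f ?x / f ?x * (?T * ?D s $ 2 + ?Y * ?D s $ 1)
        + deriv (deriv f) ?x / f ?x * ?Y * (?Y * J s $ 1 - ?T * J s $ 2)) (at s within {0..b})"
      using has_real_derivative_vec_nth[OF dD[OF s], of 1] by simp
    have "W' s $ 2 = - f ?x * deriv f ?x * ?T * ?D s $ 1
        + f ?x * deriv (deriv f) ?x * ?T * (?Y * J s $ 1 - ?T * J s $ 2)"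
      using jacobi_eq[of 2] by (auto simp: field_simps)
    then show "((\<lambda>s. ?D s $ 2) has_real_derivative - f ?x * deriv f ?x * ?T * ?D s $ 1
        + f ?x * deriv (deriv f) ?x * ?T * (?Y * J s $ 1 - ?T * J s $ 2)) (at s within {0..b})"
      using has_real_derivative_vec_nth[OF dD[OF s], of 2] by simp
  qed
qed

lemma smooth_fun_derivs:
  assumes "smooth_fun f"
  shows "(f has_real_derivative deriv f y) (at y)"
    and "(deriv f has_real_derivative deriv (deriv f) y) (at y)"
    and "continuous_on UNIV (deriv (deriv f))"
proof -
  have diff: "((deriv ^^ n) f) differentiable (at y)" for n y
    using assms unfolding smooth_fun_def by blast
  show "(f has_real_derivative deriv f y) (at y)"
    using diff[of 0] by (simp add: DERIV_deriv_iff_real_differentiable)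
  show "(deriv f has_real_derivative deriv (deriv f) y) (at y)"
    using diff[of 1] by (simp add: DERIV_deriv_iff_real_differentiable)
  show "continuous_on UNIV (deriv (deriv f))"
    using diff[of 2] by (simp add: continuous_at_imp_continuous_on differentiable_imp_continuous_within numeral_2_eq_2)
qed

lemma jacobi_field_gf_eq_0:
  assumes "\<And>y. 0 < f y"
    and "\<And>y. (f has_real_derivative deriv f y) (at y)"
    and "\<And>y. (deriv f has_real_derivative deriv (deriv f) y) (at y)"
    and "continuous_on UNIV (deriv (deriv f))" and "\<And>y. f y \<le> f x0"
    and "0 < b" and "timelike_geodesic (gf f) \<gamma> b" and "\<gamma> 0 $ 2 = x0" and "jacobi_field (gf f) \<gamma> b J"
    and "s1 \<in> {0..b}" "s2 \<in> {0..b}" "s1 \<noteq> s2" "J s1 = 0" "J s2 = 0"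
    and "s \<in> {0..b}"
  shows "J s = 0"
proof -
  interpret gf_jacobi f b "\<lambda>s. \<gamma> s $ 2" "\<lambda>s. vel \<gamma> b s $ 1" "\<lambda>s. vel \<gamma> b s $ 2"
    "\<lambda>s. J s $ 1" "\<lambda>s. J s $ 2" "\<lambda>s. covd (gf f) \<gamma> b (vel J b) J s $ 1" "\<lambda>s. covd (gf f) \<gamma> b (vel J b) J s $ 2"
    using jacobi_field_gf assms(1-3,6,7,9) .
  have "J s $ 1 = 0 \<and> J s $ 2 = 0"
    using jacobi_eq_0_if_two_zeros[OF assms(8,5,4,10-12)] assms(13-15) by simp
  then show ?thesis
    by (simp add: vec_eq_iff forall_2)
qed

theorem lemma3p1:
  fixes f :: "real \<Rightarrow> real" and t0 x0 :: real
  assumes "smooth_fun f"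
    and "\<exists>a c. 0 < a \<and> (\<forall>x. a \<le> f x \<and> f x \<le> c)"
    and "f x0 = (SUP x. f x)"
  shows "timelike_pole (gf f) (vector [t0, x0])"
proof -
  obtain a c where "0 < a" and bounds: "\<And>y. a \<le> f y \<and> f y \<le> c"
    using assms(2) by blast
  then have f_pos: "\<And>y. 0 < f y"
    by (metis less_le_trans)
  have max: "\<And>y. f y \<le> f x0"
    unfolding assms(3) using bounds by (intro cSUP_upper bdd_aboveI[of _ c]) auto
  show ?thesis
    unfolding timelike_pole_def
  proof (intro allI impI notI)
    fix \<gamma> b
    assume geodesic: "0 < b \<and> timelike_geodesic (gf f) \<gamma> b \<and> \<gamma> 0 = vector [t0, x0]"
    assume "\<exists>s1 s2. conjugate_pair (gf f) \<gamma> b s1 s2"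
    then obtain s1 s2 J s where "jacobi_field (gf f) \<gamma> b J" "s1 \<in> {0..b}" "s2 \<in> {0..b}" "s1 \<noteq> s2"
      "J s1 = 0" "J s2 = 0" "s \<in> {0..b}" "J s \<noteq> 0"
      unfolding conjugate_pair_def by blast
    with geodesic show False
      using jacobi_field_gf_eq_0[OF f_pos smooth_fun_derivs[OF assms(1)] max, of b \<gamma> J s1 s2 s] by simp
  qed
qed

end
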